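(* Let $b\in B$, $i\in I$, $m=\varphi_i(b)$, $j\ge0$, $\mu\in P$, and put $n=\langle h_i,\mu\rangle+m$. Assume $n\ge0$. Then $\tilde f_i^{\,n}$ restricts to a bijection $$\tilde f_i^{\,n}:\ \bigsqcup_{t=0}^m\mathcal P_j(\tilde f_i^tb,\mu+t\alpha_i)\ \longrightarrow\ \bigsqcup_{t=0}^m\mathcal P_j\bigl(\tilde f_i^tb,\ r_i(\mu+(m-t)\alpha_i)\bigr),$$ where $\tilde f_i$ acts on $B^{\otimes(j+1)}$ by the tensor product rule.
   Context: $\mathfrak g$ is an affine Kac–Moody algebra with index set $I$ ($0$ the special node), Cartan matrix $(a_{ij})$, simple coroots $h_i$, fundamental weights $\Lambda_i$, null root $\delta$. $P=\bigoplus_{i\in I}\mathbb Z\Lambda_i\oplus\mathbb Z\delta$, $P_{cl}=\bigoplus_{i\in I}\mathbb Z\Lambda_i$, $cl:P\to P_{cl}$ the projection killing $\delta$; simple roots $\alpha_i=\sum_ja_{ji}\Lambda_j+\delta_{i0}\delta\in P$; $r_i(\mu)=\mu-\langle h_i,\mu\rangle\alpha_i$. $B$ is a finite crystal with $wt:B\to P_{cl}$, Kashiwara operators $\tilde e_i,\tilde f_i$, $\varepsilon_i(b)=\max\{k:\tilde e_i^kb\ne0\}$, $\varphi_i(b)=\max\{k:\tilde f_i^kb\ne0\}$, $\varphi_i(b)-\varepsilon_i(b)=\langle h_i,wt\,b\rangle$, $wt(\tilde f_ib)=wt(b)-cl(\alpha_i)$. Tensor products: $wt$ is additive; $\tilde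 e_i(b_1\otimes b_2)=\tilde e_ib_1\otimes b_2$ if $\varphi_i(b_1)\ge\varepsilon_i(b_2)$ and $=b_1\otimes\tilde e_ib_2$ otherwise; $\tilde f_i(b_1\otimes b_2)=\tilde f_ib_1\otimes b_2$ if $\varphi_i(b_1)>\varepsilon_i(b_2)$ and $=b_1\otimes\tilde f_ib_2$ otherwise. For $j\ge0$, $b\in B$, $\mu\in P$: $\mathcal P_j(b,\mu)=\{b\otimes b_j\otimes\cdots\otimes b_1\in B^{\otimes(j+1)}:wt(b_j)+\cdots+wt(b_1)=cl(\mu)\}$. *)

theory Defs
  imports Main
begin

text \<open>A generalized Cartan matrix is a function A :: 'i => 'i => int on a finite index
type, A i j = a_ij.  Affine type (Kac, Thm 4.3): indecomposable GCM admitting a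
vector u > 0 with A u = 0.\<close>

definition gcm :: "('i \<Rightarrow> 'i \<Rightarrow> int) \<Rightarrow> bool" where
  "gcm A \<longleftrightarrow> (\<forall>i. A i i = 2) \<and> (\<forall>i j. i \<noteq> j \<longrightarrow> A i j \<le> 0)
     \<and> (\<forall>i j. A i j = 0 \<longleftrightarrow> A j i = 0)"

definition indecomposable :: "('i \<Rightarrow> 'i \<Rightarrow> int) \<Rightarrow> bool" where
  "indecomposable A \<longleftrightarrow> \<not> (\<exists>J. J \<noteq> {} \<and> J \<noteq> UNIV \<and> (\<forall>j\<in>J. \<forall>k. k \<notin> J \<longrightarrow> A j k = 0))"

definition affine_gcm :: "('i::finite \<Rightarrow> 'i \<Rightarrow> int) \<Rightarrow> bool" where
  "affine_gcm A \<longleftrightarrow> gcm A \<and> indecomposable A \<and>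
     (\<exists>u :: 'i \<Rightarrow> int. (\<forall>j. u j > 0) \<and> (\<forall>i. (\<Sum>j\<in>UNIV. A i j * u j) = 0))"

text \<open>Weight lattice P = (sum of Z Lambda_i) + Z delta, represented as a pair
(coefficients of the Lambda_i, coefficient of delta).  P_cl = 'i => int.\<close>

type_synonym 'i wP = "('i \<Rightarrow> int) \<times> int"
type_synonym 'i wPcl = "'i \<Rightarrow> int"

definition wadd :: "'i wP \<Rightarrow> 'i wP \<Rightarrow> 'i wP" where
  "wadd x y = ((\<lambda>k. fst x k + fst y k), snd x + snd y)"

definition wscale :: "int \<Rightarrow> 'i wP \<Rightarrow> 'i wP" where
  "wscale c x = ((\<lambda>k. c * fst x k), c * snd x)"

definition cl :: "'i wP \<Rightarrow> 'i wPcl" where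
  "cl x = fst x"

text \<open><h_i, mu>: h_i pairs with Lambda_j to delta_ij and with delta to 0.\<close>
definition pairing :: "'i \<Rightarrow> 'i wP \<Rightarrow> int" where
  "pairing i x = fst x i"

text \<open>alpha_i = sum_j a_ji Lambda_j + delta_{i,0} delta, with 0 the special node i0.\<close>
definition alpha :: "('i \<Rightarrow> 'i \<Rightarrow> int) \<Rightarrow> 'i \<Rightarrow> 'i \<Rightarrow> 'i wP" where
  "alpha A i0 i = ((\<lambda>j. A j i), (if i = i0 then 1 else 0))"

definition rrefl :: "('i \<Rightarrow> 'i \<Rightarrow> int) \<Rightarrow> 'i \<Rightarrow> 'i \<Rightarrow> 'i wP \<Rightarrow> 'i wP" where
  "rrefl A i0 i x = wadd x (wscale (- pairing i x) (alpha A i0 i))"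

text \<open>A crystal structure on elements of type 'a: weight map, and Kashiwara
operators where None plays the role of 0.\<close>
record ('i, 'a) crys =
  wt :: "'a \<Rightarrow> 'i \<Rightarrow> int"
  ee :: "'i \<Rightarrow> 'a \<Rightarrow> 'a option"
  ff :: "'i \<Rightarrow> 'a \<Rightarrow> 'a option"

definition eiter :: "('i, 'a) crys \<Rightarrow> 'i \<Rightarrow> nat \<Rightarrow> 'a \<Rightarrow> 'a option" where
  "eiter C i k x = ((\<lambda>ox. Option.bind ox (ee C i)) ^^ k) (Some x)"

definition fiter :: "('i, 'a) crys \<Rightarrow> 'i \<Rightarrow> nat \<Rightarrow> 'a \<Rightarrow> 'a option" where
  "fiter C i k x = ((\<lambda>ox. Option.bind ox (ff C i)) ^^ k) (Some x)"

definition eps :: "('i, 'a) crys \<Rightarrow> 'i \<Rightarrow> 'a \<Rightarrow> nat" where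
  "eps C i x = (GREATEST k. eiter C i k x \<noteq> None)"

definition phi :: "('i, 'a) crys \<Rightarrow> 'i \<Rightarrow> 'a \<Rightarrow> nat" where
  "phi C i x = (GREATEST k. fiter C i k x \<noteq> None)"

definition is_crystal :: "('i \<Rightarrow> 'i \<Rightarrow> int) \<Rightarrow> 'a set \<Rightarrow> ('i, 'a) crys \<Rightarrow> bool" where
  "is_crystal A B C \<longleftrightarrow> finite B
   \<and> (\<forall>i b b'. b \<in> B \<longrightarrow> ee C i b = Some b' \<longrightarrow> b' \<in> B)
   \<and> (\<forall>i b b'. b \<in> B \<longrightarrow> ff C i b = Some b' \<longrightarrow> b' \<in> B)
   \<and> (\<forall>i b b'. b \<in> B \<longrightarrow> b' \<in> B \<longrightarrow> (ff C i b = Some b') = (ee C i b' = Some b))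
   \<and> (\<forall>i b b'. b \<in> B \<longrightarrow> ff C i b = Some b' \<longrightarrow> wt C b' = (\<lambda>k. wt C b k - A k i))
   \<and> (\<forall>i b. b \<in> B \<longrightarrow> int (phi C i b) - int (eps C i b) = wt C b i)"

text \<open>Tensor product b1 (x) b2 with b1 from C and b2 a list (tensor of the remaining
factors) from D; the list y # ys stands for y (x) ys.\<close>
definition tensor :: "('i, 'a) crys \<Rightarrow> ('i, 'a list) crys \<Rightarrow> ('i, 'a list) crys" where
  "tensor C D = \<lparr> wt = (\<lambda>xs. case xs of [] \<Rightarrow> (\<lambda>_. 0)
                        | y # ys \<Rightarrow> (\<lambda>k. wt C y k + wt D ys k)),
     ee = (\<lambda>i xs. case xs of [] \<Rightarrow> None
              | y # ys \<Rightarrow> (if eps D i ys \<le> phi C i y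
                          then map_option (\<lambda>z. z # ys) (ee C i y)
                          else map_option (\<lambda>zs. y # zs) (ee D i ys))),
     ff = (\<lambda>i xs. case xs of [] \<Rightarrow> None
              | y # ys \<Rightarrow> (if eps D i ys < phi C i y
                          then map_option (\<lambda>z. z # ys) (ff C i y)
                          else map_option (\<lambda>zs. y # zs) (ff D i ys))) \<rparr>"

definition single :: "('i, 'a) crys \<Rightarrow> ('i, 'a list) crys" where
  "single C = \<lparr> wt = (\<lambda>xs. case xs of [y] \<Rightarrow> wt C y | _ \<Rightarrow> (\<lambda>_. 0)),
     ee = (\<lambda>i xs. case xs of [y] \<Rightarrow> map_option (\<lambda>z. [z]) (ee C i y) | _ \<Rightarrow> None),
     ff = (\<lambda>i xs. case xs of [y] \<Rightarrow> map_option (\<lambda>z. [z]) (ff C i y) | _ \<Rightarrow> None) \<rparr>"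

text \<open>tpow C j is B^{(x)(j+1)} on lists [b, b_j, ..., b_1] of length j+1,
 nested as b (x) (b_j (x) (... (x) b_1)).\<close>
primrec tpow :: "('i, 'a) crys \<Rightarrow> nat \<Rightarrow> ('i, 'a list) crys" where
  "tpow C 0 = single C"
| "tpow C (Suc j) = tensor C (tpow C j)"

definition Pj :: "'a set \<Rightarrow> ('i, 'a) crys \<Rightarrow> nat \<Rightarrow> 'a \<Rightarrow> 'i wP \<Rightarrow> 'a list set" where
  "Pj B C j b mu = {b # bs | bs. length bs = j \<and> set bs \<subseteq> B
        \<and> (\<lambda>k. \<Sum>x\<leftarrow>bs. wt C x k) = cl mu}"

end

(* Only the colour i matters, and for it the tensor rule is explicit: with d = phi y - eps p
   (truncated at 0), f_i^k (y (x) p) = f_i^(min k d) y (x) f_i^(k - d) p.  Hence phi and eps of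
   y (x) p are the usual expressions, a tensor product of crystals is again a crystal, and
   B^((x)(j+1)) = B (x) B^((x)j).  Put b_t = f_i^t b, so that phi b_t = m - t.  If p has weight
   mu + t alpha_i, then phi p - eps p = <h_i, mu> + 2t forces n <= phi (b_t (x) p), and
   f_i^n (b_t (x) p) = b_(t+a) (x) f_i^(n-a) p with a = min n d; the second factor has weight
   mu + (t + a - n) alpha_i, which is the classical part of r_i (mu + (m - t - a) alpha_i).
   Symmetrically e_i^n maps the second union into the first, and e_i^n, f_i^n are mutually
   inverse on a crystal. *)

theory Submission
  imports Defs
begin

definition piter :: "('a \<Rightarrow> 'a option) \<Rightarrow> nat \<Rightarrow> 'a \<Rightarrow> 'a option" where
  "piter g k x = ((\<lambda>ox. Option.bind ox g) ^^ k) (Some x)"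

lemma fiter_piter: "fiter D i = piter (ff D i)"
  by (simp add: fiter_def piter_def fun_eq_iff)

lemma eiter_piter: "eiter D i = piter (ee D i)"
  by (simp add: eiter_def piter_def fun_eq_iff)

lemma piter_0 [simp]: "piter g 0 x = Some x"
  by (simp add: piter_def)

lemma piter_Suc_right: "piter g (Suc k) x = Option.bind (piter g k x) g"
  by (simp add: piter_def)

lemma piter_add: "piter g (k + l) x = Option.bind (piter g l x) (piter g k)"
proof -
  have None: "((\<lambda>ox. Option.bind ox g) ^^ k) None = None" for k
    by (induction k) simp_all
  have "piter g (k + l) x = ((\<lambda>ox. Option.bind ox g) ^^ k) (piter g l x)"
    by (simp add: piter_def funpow_add)
  then show ?thesis
    by (cases "piter g l x") (simp_all add: None piter_def)
qed

lemma piter_Suc: "piter g (Suc k) x = Option.bind (g x) (piter g k)"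
  using piter_add[of g k 1 x] by (simp add: piter_def)

lemma piter_inverse:
  assumes "\<And>x y. x \<in> S \<Longrightarrow> g x = Some y \<Longrightarrow> y \<in> S \<and> h y = Some x"
  shows "x \<in> S \<Longrightarrow> piter g k x = Some y \<Longrightarrow> y \<in> S \<and> piter h k y = Some x"
proof (induction k arbitrary: y)
  case 0
  then show ?case by simp
next
  case (Suc k)
  then obtain z where z: "piter g k x = Some z" "g z = Some y"
    by (cases "piter g k x") (auto simp: piter_Suc_right)
  with Suc.IH[OF Suc.prems(1)] have "z \<in> S" "piter h k z = Some x"
    by blast+
  with z(2) assms show ?case
    by (auto simp: piter_Suc)
qed

lemma piter_cong:
  assumes "\<And>x. x \<in> S \<Longrightarrow> g' x = g x" and "\<And>x y. x \<in> S \<Longrightarrow> g x = Some y \<Longrightarrow> y \<in> S"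
  shows "x \<in> S \<Longrightarrow> piter g' k x = piter g k x"
proof (induction k arbitrary: x)
  case 0
  then show ?case by simp
next
  case (Suc k)
  with assms show ?case
    by (cases "g x") (auto simp: piter_Suc)
qed

lemma piter_dom_Greatest:
  fixes h :: "'a \<Rightarrow> int"
  assumes dec: "\<And>x y. x \<in> S \<Longrightarrow> g x = Some y \<Longrightarrow> y \<in> S \<and> h y < h x"
    and bdd: "\<And>x. x \<in> S \<Longrightarrow> lo \<le> h x" and "x \<in> S"
  shows "piter g k x \<noteq> None \<longleftrightarrow> k \<le> (GREATEST k. piter g k x \<noteq> None)"
proof -
  have bound: "int k \<le> h x - lo" if "x \<in> S" "piter g k x \<noteq> None" for k x
    using that
  proof (induction k arbitrary: x)
    case 0
    then show ?case using bdd by simp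
  next
    case (Suc k)
    then obtain y where "g x = Some y" "piter g k y \<noteq> None"
      by (cases "g x") (auto simp: piter_Suc)
    with dec[OF Suc.prems(1)] Suc.IH show ?case
      by fastforce
  qed
  have le_bound: "k \<le> nat (h x - lo)" if "piter g k x \<noteq> None" for k
    using bound[OF \<open>x \<in> S\<close> that] by linarith
  define G where "G = (GREATEST k. piter g k x \<noteq> None)"
  have G: "piter g G x \<noteq> None"
    unfolding G_def by (rule GreatestI_nat[of _ 0 "nat (h x - lo)"]) (auto intro: le_bound)
  show ?thesis
    unfolding G_def[symmetric]
  proof
    assume "piter g k x \<noteq> None"
    then show "k \<le> G"
      unfolding G_def by (rule Greatest_le_nat[OF _ le_bound])
  next
    assume "k \<le> G"
    then have "piter g G x = Option.bind (piter g k x) (piter g (G - k))"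
      using piter_add[of g "G - k" k x] by simp
    with G show "piter g k x \<noteq> None"
      by (cases "piter g k x") simp_all
  qed
qed

lemma bij_betw_partial_inverse:
  assumes "\<And>x. x \<in> X \<Longrightarrow> \<exists>z\<in>Y. F x = Some z \<and> G z = Some x"
    and "\<And>z. z \<in> Y \<Longrightarrow> \<exists>x\<in>X. G z = Some x \<and> F x = Some z"
  shows "(\<forall>x\<in>X. F x \<noteq> None) \<and> bij_betw (\<lambda>x. the (F x)) X Y"
proof
  show "\<forall>x\<in>X. F x \<noteq> None"
    using assms(1) by fastforce
  show "bij_betw (\<lambda>x. the (F x)) X Y"
    by (rule bij_betw_byWitness[where f' = "\<lambda>z. the (G z)"]) (use assms in fastforce)+
qed

lemma phi_eqI: "(\<And>k. fiter D i k x \<noteq> None \<longleftrightarrow> k \<le> M) \<Longrightarrow> phi D i x = M"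
  unfolding phi_def by (rule Greatest_equality) auto

lemma eps_eqI: "(\<And>k. eiter D i k x \<noteq> None \<longleftrightarrow> k \<le> M) \<Longrightarrow> eps D i x = M"
  unfolding eps_def by (rule Greatest_equality) auto

(* Finiteness is replaced
   by finiteness of i-strings (fiter_dom, eiter_dom); unlike is_crystal, this notion is preserved
   by tensor products. *)
locale colour_crystal =
  fixes A :: "'i \<Rightarrow> 'i \<Rightarrow> int" and i :: 'i and D :: "('i, 'a) crys" and S :: "'a set"
  assumes ff_closed: "x \<in> S \<Longrightarrow> ff D i x = Some y \<Longrightarrow> y \<in> S"
    and ee_closed: "x \<in> S \<Longrightarrow> ee D i x = Some y \<Longrightarrow> y \<in> S"
    and ee_ff: "x \<in> S \<Longrightarrow> ff D i x = Some y \<Longrightarrow> ee D i y = Some x"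
    and ff_ee: "x \<in> S \<Longrightarrow> ee D i x = Some y \<Longrightarrow> ff D i y = Some x"
    and wt_ff: "x \<in> S \<Longrightarrow> ff D i x = Some y \<Longrightarrow> wt D y = (\<lambda>k. wt D x k - A k i)"
    and fiter_dom: "x \<in> S \<Longrightarrow> fiter D i k x \<noteq> None \<longleftrightarrow> k \<le> phi D i x"
    and eiter_dom: "x \<in> S \<Longrightarrow> eiter D i k x \<noteq> None \<longleftrightarrow> k \<le> eps D i x"
    and phi_minus_eps: "x \<in> S \<Longrightarrow> int (phi D i x) - int (eps D i x) = wt D x i"
begin

lemma phi_ff:
  assumes "x \<in> S" "ff D i x = Some y"
  shows "phi D i x = Suc (phi D i y)"
proof (rule phi_eqI)
  fix k
  show "fiter D i k x \<noteq> None \<longleftrightarrow> k \<le> Suc (phi D i y)"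
    using fiter_dom[OF ff_closed[OF assms]] assms(2)
    by (cases k) (simp_all add: fiter_piter piter_Suc)
qed

lemma eps_ee:
  assumes "x \<in> S" "ee D i x = Some y"
  shows "eps D i x = Suc (eps D i y)"
proof (rule eps_eqI)
  fix k
  show "eiter D i k x \<noteq> None \<longleftrightarrow> k \<le> Suc (eps D i y)"
    using eiter_dom[OF ee_closed[OF assms]] assms(2)
    by (cases k) (simp_all add: eiter_piter piter_Suc)
qed

lemma eps_ff: "x \<in> S \<Longrightarrow> ff D i x = Some y \<Longrightarrow> eps D i y = Suc (eps D i x)"
  using eps_ee ff_closed ee_ff by blast

lemma phi_ee: "x \<in> S \<Longrightarrow> ee D i x = Some y \<Longrightarrow> phi D i y = Suc (phi D i x)"
  using phi_ff ee_closed ff_ee by blast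

lemma phi_eq_0_iff: "x \<in> S \<Longrightarrow> phi D i x = 0 \<longleftrightarrow> ff D i x = None"
  using fiter_dom[of x 1] by (cases "ff D i x") (auto simp: fiter_piter piter_Suc)

lemma eps_eq_0_iff: "x \<in> S \<Longrightarrow> eps D i x = 0 \<longleftrightarrow> ee D i x = None"
  using eiter_dom[of x 1] by (cases "ee D i x") (auto simp: eiter_piter piter_Suc)

lemma fiter_inverse: "x \<in> S \<Longrightarrow> fiter D i k x = Some y \<Longrightarrow> y \<in> S \<and> eiter D i k y = Some x"
  using piter_inverse[of S "ff D i" "ee D i" x k y] ff_closed ee_ff
  unfolding fiter_piter eiter_piter by blast

lemma eiter_inverse: "x \<in> S \<Longrightarrow> eiter D i k x = Some y \<Longrightarrow> y \<in> S \<and> fiter D i k y = Some x"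
  using piter_inverse[of S "ee D i" "ff D i" x k y] ee_closed ff_ee
  unfolding fiter_piter eiter_piter by blast

lemma fiter_SomeE:
  assumes "x \<in> S" "k \<le> phi D i x"
  obtains y where "fiter D i k x = Some y" "y \<in> S"
  using fiter_dom[OF assms(1), of k] fiter_inverse[OF assms(1)] assms(2) by auto

lemma eiter_SomeE:
  assumes "x \<in> S" "k \<le> eps D i x"
  obtains y where "eiter D i k x = Some y" "y \<in> S"
  using eiter_dom[OF assms(1), of k] eiter_inverse[OF assms(1)] assms(2) by auto

lemma fiter_SomeD:
  "x \<in> S \<Longrightarrow> fiter D i k x = Some y \<Longrightarrow> wt D y = (\<lambda>l. wt D x l - int k * A l i)
     \<and> phi D i y = phi D i x - k \<and> eps D i y = eps D i x + k"
proof (induction k arbitrary: y)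
  case 0
  then show ?case by (simp add: fiter_piter)
next
  case (Suc k)
  then obtain z where z: "fiter D i k x = Some z" "ff D i z = Some y"
    by (cases "fiter D i k x") (auto simp: fiter_piter piter_Suc_right)
  have "z \<in> S"
    using fiter_inverse[OF Suc.prems(1) z(1)] by blast
  with z Suc.IH[OF Suc.prems(1)] show ?case
    using wt_ff phi_ff eps_ff by (fastforce simp: algebra_simps)
qed

lemma eiter_wt: "x \<in> S \<Longrightarrow> eiter D i k x = Some y \<Longrightarrow> wt D y = (\<lambda>l. wt D x l + int k * A l i)"
  using eiter_inverse fiter_SomeD by fastforce

lemma fiter_cong:
  "(\<And>x. x \<in> S \<Longrightarrow> ff D' i x = ff D i x) \<Longrightarrow> x \<in> S \<Longrightarrow> fiter D' i k x = fiter D i k x"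
  unfolding fiter_piter by (rule piter_cong) (use ff_closed in auto)

lemma eiter_cong:
  "(\<And>x. x \<in> S \<Longrightarrow> ee D' i x = ee D i x) \<Longrightarrow> x \<in> S \<Longrightarrow> eiter D' i k x = eiter D i k x"
  unfolding eiter_piter by (rule piter_cong) (use ee_closed in auto)

end

lemma colour_crystal_cong:
  assumes "colour_crystal A i D S"
    and ff: "\<And>x. x \<in> S \<Longrightarrow> ff D' i x = ff D i x"
    and ee: "\<And>x. x \<in> S \<Longrightarrow> ee D' i x = ee D i x"
    and wt: "\<And>x. x \<in> S \<Longrightarrow> wt D' x = wt D x"
  shows "colour_crystal A i D' S"
proof -
  interpret colour_crystal A i D S by fact
  have phi: "phi D' i x = phi D i x" and eps: "eps D' i x = eps D i x" if "x \<in> S" for x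
    using fiter_cong[OF ff that] eiter_cong[OF ee that] by (simp_all add: phi_def eps_def)
  show ?thesis
  proof
    show "y \<in> S" if "x \<in> S" "ff D' i x = Some y" for x y
      using that ff_closed ff by metis
    show "y \<in> S" if "x \<in> S" "ee D' i x = Some y" for x y
      using that ee_closed ee by metis
    show "ee D' i y = Some x" if "x \<in> S" "ff D' i x = Some y" for x y
      using that ff_closed ee_ff ff ee by metis
    show "ff D' i y = Some x" if "x \<in> S" "ee D' i x = Some y" for x y
      using that ee_closed ff_ee ff ee by metis
    show "wt D' y = (\<lambda>k. wt D' x k - A k i)" if "x \<in> S" "ff D' i x = Some y" for x y
      using that ff_closed wt_ff ff wt by metis
    show "fiter D' i k x \<noteq> None \<longleftrightarrow> k \<le> phi D' i x" if "x \<in> S" for x k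
      using that fiter_dom fiter_cong[OF ff] phi by metis
    show "eiter D' i k x \<noteq> None \<longleftrightarrow> k \<le> eps D' i x" if "x \<in> S" for x k
      using that eiter_dom eiter_cong[OF ee] eps by metis
    show "int (phi D' i x) - int (eps D' i x) = wt D' x i" if "x \<in> S" for x
      using that phi_minus_eps phi eps wt by metis
  qed
qed

lemma colour_crystal_of_is_crystal:
  assumes cr: "is_crystal A B C" and Aii: "A i i = 2"
  shows "colour_crystal A i C B"
proof -
  have fin: "finite B"
    and ff_closed: "\<And>x y. x \<in> B \<Longrightarrow> ff C i x = Some y \<Longrightarrow> y \<in> B"
    and ee_closed: "\<And>x y. x \<in> B \<Longrightarrow> ee C i x = Some y \<Longrightarrow> y \<in> B"
    and ff_iff_ee: "\<And>x y. x \<in> B \<Longrightarrow> y \<in> B \<Longrightarrow> ff C i x = Some y \<longleftrightarrow> ee C i y = Some x"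
    and wt_ff: "\<And>x y. x \<in> B \<Longrightarrow> ff C i x = Some y \<Longrightarrow> wt C y = (\<lambda>k. wt C x k - A k i)"
    and phi_eps: "\<And>x. x \<in> B \<Longrightarrow> int (phi C i x) - int (eps C i x) = wt C x i"
    using cr unfolding is_crystal_def by blast+
  have wt_dec: "y \<in> B \<and> wt C y i < wt C x i" if "x \<in> B" "ff C i x = Some y" for x y
    using ff_closed[OF that] wt_ff[OF that] Aii by simp
  have wt_inc: "y \<in> B \<and> - wt C y i < - wt C x i" if "x \<in> B" "ee C i x = Some y" for x y
    using ee_closed[OF that] wt_dec[of y x] ff_iff_ee that by auto
  have wt_lower: "Min ((\<lambda>y. wt C y i) ` B) \<le> wt C x i"
    and neg_wt_lower: "Min ((\<lambda>y. - wt C y i) ` B) \<le> - wt C x i" if "x \<in> B" for x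
    using fin that by simp_all
  have fiter_dom: "fiter C i k x \<noteq> None \<longleftrightarrow> k \<le> phi C i x" if "x \<in> B" for k x
    unfolding phi_def fiter_piter
    by (rule piter_dom_Greatest[where g = "ff C i", OF wt_dec wt_lower that])
  have eiter_dom: "eiter C i k x \<noteq> None \<longleftrightarrow> k \<le> eps C i x" if "x \<in> B" for k x
    unfolding eps_def eiter_piter
    by (rule piter_dom_Greatest[where g = "ee C i", OF wt_inc neg_wt_lower that])
  show ?thesis
  proof
    show "ee C i y = Some x" if "x \<in> B" "ff C i x = Some y" for x y
      using that ff_closed ff_iff_ee by blast
    show "ff C i y = Some x" if "x \<in> B" "ee C i x = Some y" for x y
      using that ee_closed ff_iff_ee by blast
  qed (use ff_closed ee_closed wt_ff fiter_dom eiter_dom phi_eps in blast)+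
qed

definition unit_crys :: "('i, 'a) crys" where
  "unit_crys = \<lparr>wt = (\<lambda>_ _. 0), ee = (\<lambda>_ _. None), ff = (\<lambda>_ _. None)\<rparr>"

lemma unit_crys_simps [simp]:
  "ff unit_crys i x = None" "ee unit_crys i x = None" "wt unit_crys x = (\<lambda>_. 0)"
  by (simp_all add: unit_crys_def)

lemma fiter_unit_crys: "fiter unit_crys i k x = (if k = 0 then Some x else None)"
  by (cases k) (simp_all add: fiter_piter piter_Suc)

lemma eiter_unit_crys: "eiter unit_crys i k x = (if k = 0 then Some x else None)"
  by (cases k) (simp_all add: eiter_piter piter_Suc)

lemma phi_unit_crys [simp]: "phi unit_crys i x = 0"
  by (rule phi_eqI) (simp add: fiter_unit_crys)

lemma eps_unit_crys [simp]: "eps unit_crys i x = 0"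
  by (rule eps_eqI) (simp add: eiter_unit_crys)

lemma colour_crystal_unit_crys: "colour_crystal A i unit_crys {x}"
  by unfold_locales (simp_all add: fiter_unit_crys eiter_unit_crys)

(* P_j(y, mu), with B^((x)j) replaced by a crystal D on S and mu by its classical weight w. *)
definition tensor_fibre :: "('i, 'a list) crys \<Rightarrow> 'a list set \<Rightarrow> 'a \<Rightarrow> ('i \<Rightarrow> int) \<Rightarrow> 'a list set" where
  "tensor_fibre D S y w = {y # p | p. p \<in> S \<and> wt D p = w}"

locale colour_crystal_pair = C: colour_crystal A i C B + D: colour_crystal A i D S
  for A :: "'i \<Rightarrow> 'i \<Rightarrow> int" and i :: 'i and C :: "('i, 'a) crys" and B :: "'a set"
    and D :: "('i, 'a list) crys" and S :: "'a list set"
begin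

lemma ff_tensor: "ff (tensor C D) i (y # ys) = (if eps D i ys < phi C i y
    then map_option (\<lambda>y'. y' # ys) (ff C i y) else map_option (Cons y) (ff D i ys))"
  by (simp add: tensor_def)

lemma ee_tensor: "ee (tensor C D) i (y # ys) = (if eps D i ys \<le> phi C i y
    then map_option (\<lambda>y'. y' # ys) (ee C i y) else map_option (Cons y) (ee D i ys))"
  by (simp add: tensor_def)

lemma wt_tensor: "wt (tensor C D) (y # ys) = (\<lambda>k. wt C y k + wt D ys k)"
  by (simp add: tensor_def)

lemma fiter_tensor:
  assumes "y \<in> B" "ys \<in> S"
  shows "fiter (tensor C D) i k (y # ys) =
    Option.bind (fiter C i (min k (phi C i y - eps D i ys)) y)
      (\<lambda>y'. map_option (Cons y') (fiter D i (k - (phi C i y - eps D i ys)) ys))"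
  using assms
proof (induction k arbitrary: y ys)
  case 0
  then show ?case by (simp add: fiter_piter)
next
  case (Suc k)
  show ?case
  proof (cases "eps D i ys < phi C i y")
    case True
    then obtain y' where y': "ff C i y = Some y'"
      using C.phi_eq_0_iff[OF Suc.prems(1)] by fastforce
    have "y' \<in> B" "phi C i y = Suc (phi C i y')"
      using C.ff_closed C.phi_ff Suc.prems(1) y' by blast+
    with True y' Suc.IH[OF \<open>y' \<in> B\<close> Suc.prems(2)] show ?thesis
      by (simp add: fiter_piter piter_Suc ff_tensor Suc_diff_le)
  next
    case False
    show ?thesis
    proof (cases "ff D i ys")
      case None
      with False show ?thesis
        by (simp add: fiter_piter piter_Suc ff_tensor)
    next
      case (Some ys')
      have "ys' \<in> S" "eps D i ys' = Suc (eps D i ys)"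
        using D.ff_closed D.eps_ff Suc.prems(2) Some by blast+
      with False Some Suc.IH[OF Suc.prems(1) \<open>ys' \<in> S\<close>] show ?thesis
        by (simp add: fiter_piter piter_Suc ff_tensor)
    qed
  qed
qed

lemma eiter_tensor:
  assumes "y \<in> B" "ys \<in> S"
  shows "eiter (tensor C D) i k (y # ys) =
    Option.bind (eiter C i (k - (eps D i ys - phi C i y)) y)
      (\<lambda>y'. map_option (Cons y') (eiter D i (min k (eps D i ys - phi C i y)) ys))"
  using assms
proof (induction k arbitrary: y ys)
  case 0
  then show ?case by (simp add: eiter_piter)
next
  case (Suc k)
  show ?case
  proof (cases "eps D i ys \<le> phi C i y")
    case True
    show ?thesis
    proof (cases "ee C i y")
      case None
      with True show ?thesis
        by (simp add: eiter_piter piter_Suc ee_tensor)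
    next
      case (Some y')
      have "y' \<in> B" "phi C i y' = Suc (phi C i y)"
        using C.ee_closed C.phi_ee Suc.prems(1) Some by blast+
      with True Some Suc.IH[OF \<open>y' \<in> B\<close> Suc.prems(2)] show ?thesis
        by (simp add: eiter_piter piter_Suc ee_tensor)
    qed
  next
    case False
    then obtain ys' where ys': "ee D i ys = Some ys'"
      using D.eps_eq_0_iff[OF Suc.prems(2)] by fastforce
    have "ys' \<in> S" "eps D i ys = Suc (eps D i ys')"
      using D.ee_closed D.eps_ee Suc.prems(2) ys' by blast+
    with False ys' Suc.IH[OF Suc.prems(1) \<open>ys' \<in> S\<close>] show ?thesis
      by (simp add: eiter_piter piter_Suc ee_tensor Suc_diff_le)
  qed
qed

lemma fiter_tensor_dom:
  assumes "y \<in> B" "ys \<in> S"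
  shows "fiter (tensor C D) i k (y # ys) \<noteq> None \<longleftrightarrow> k \<le> phi D i ys + (phi C i y - eps D i ys)"
proof -
  obtain y' where "fiter C i (min k (phi C i y - eps D i ys)) y = Some y'"
    using C.fiter_SomeE[OF assms(1), of "min k (phi C i y - eps D i ys)"] by fastforce
  then have "fiter (tensor C D) i k (y # ys) \<noteq> None
      \<longleftrightarrow> fiter D i (k - (phi C i y - eps D i ys)) ys \<noteq> None"
    by (simp add: fiter_tensor[OF assms])
  also have "\<dots> \<longleftrightarrow> k \<le> phi D i ys + (phi C i y - eps D i ys)"
    using D.fiter_dom[OF assms(2), of "k - (phi C i y - eps D i ys)"] by arith
  finally show ?thesis .
qed

lemma eiter_tensor_dom:
  assumes "y \<in> B" "ys \<in> S"
  shows "eiter (tensor C D) i k (y # ys) \<noteq> None \<longleftrightarrow> k \<le> eps C i y + (eps D i ys - phi C i y)"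
proof -
  obtain ys' where "eiter D i (min k (eps D i ys - phi C i y)) ys = Some ys'"
    using D.eiter_SomeE[OF assms(2), of "min k (eps D i ys - phi C i y)"] by fastforce
  then have "eiter (tensor C D) i k (y # ys) \<noteq> None
      \<longleftrightarrow> eiter C i (k - (eps D i ys - phi C i y)) y \<noteq> None"
    by (simp add: eiter_tensor[OF assms] split: Option.bind_split)
  also have "\<dots> \<longleftrightarrow> k \<le> eps C i y + (eps D i ys - phi C i y)"
    using C.eiter_dom[OF assms(1), of "k - (eps D i ys - phi C i y)"] by arith
  finally show ?thesis .
qed

lemma phi_tensor: "y \<in> B \<Longrightarrow> ys \<in> S \<Longrightarrow> phi (tensor C D) i (y # ys) = phi D i ys + (phi C i y - eps D i ys)"
  by (rule phi_eqI) (rule fiter_tensor_dom)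

lemma eps_tensor: "y \<in> B \<Longrightarrow> ys \<in> S \<Longrightarrow> eps (tensor C D) i (y # ys) = eps C i y + (eps D i ys - phi C i y)"
  by (rule eps_eqI) (rule eiter_tensor_dom)

lemma ff_tensor_SomeD:
  assumes y: "y \<in> B" and ys: "ys \<in> S" and f: "ff (tensor C D) i (y # ys) = Some z"
  shows "z \<in> set_Cons B S \<and> ee (tensor C D) i z = Some (y # ys)
    \<and> wt (tensor C D) z = (\<lambda>k. wt (tensor C D) (y # ys) k - A k i)"
proof (cases "eps D i ys < phi C i y")
  case True
  with f obtain y' where y': "ff C i y = Some y'" "z = y' # ys"
    by (auto simp: ff_tensor)
  with True C.ff_closed C.ee_ff C.phi_ff C.wt_ff y ys show ?thesis
    by (auto simp: set_Cons_def ee_tensor wt_tensor)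
next
  case False
  with f obtain ys' where ys': "ff D i ys = Some ys'" "z = y # ys'"
    by (auto simp: ff_tensor)
  with False D.ff_closed D.ee_ff D.eps_ff D.wt_ff y ys show ?thesis
    by (auto simp: set_Cons_def ee_tensor wt_tensor)
qed

lemma ee_tensor_SomeD:
  assumes y: "y \<in> B" and ys: "ys \<in> S" and e: "ee (tensor C D) i (y # ys) = Some z"
  shows "z \<in> set_Cons B S \<and> ff (tensor C D) i z = Some (y # ys)"
proof (cases "eps D i ys \<le> phi C i y")
  case True
  with e obtain y' where y': "ee C i y = Some y'" "z = y' # ys"
    by (auto simp: ee_tensor)
  with True C.ee_closed C.ff_ee C.phi_ee y ys show ?thesis
    by (auto simp: set_Cons_def ff_tensor)
next
  case False
  with e obtain ys' where ys': "ee D i ys = Some ys'" "z = y # ys'"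
    by (auto simp: ee_tensor)
  with False D.ee_closed D.ff_ee D.eps_ee y ys show ?thesis
    by (auto simp: set_Cons_def ff_tensor)
qed

lemma colour_crystal_tensor: "colour_crystal A i (tensor C D) (set_Cons B S)"
proof
  fix x assume "x \<in> set_Cons B S"
  then obtain y ys where x: "x = y # ys" "y \<in> B" "ys \<in> S"
    by (auto simp: set_Cons_def)
  show "z \<in> set_Cons B S" "ee (tensor C D) i z = Some x" "wt (tensor C D) z = (\<lambda>k. wt (tensor C D) x k - A k i)"
    if "ff (tensor C D) i x = Some z" for z
    using ff_tensor_SomeD[OF x(2,3)] that x(1) by blast+
  show "z \<in> set_Cons B S" "ff (tensor C D) i z = Some x" if "ee (tensor C D) i x = Some z" for z
    using ee_tensor_SomeD[OF x(2,3)] that x(1) by blast+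
  show "fiter (tensor C D) i k x \<noteq> None \<longleftrightarrow> k \<le> phi (tensor C D) i x" for k
    unfolding x(1) phi_tensor[OF x(2,3)] by (rule fiter_tensor_dom[OF x(2,3)])
  show "eiter (tensor C D) i k x \<noteq> None \<longleftrightarrow> k \<le> eps (tensor C D) i x" for k
    unfolding x(1) eps_tensor[OF x(2,3)] by (rule eiter_tensor_dom[OF x(2,3)])
  show "int (phi (tensor C D) i x) - int (eps (tensor C D) i x) = wt (tensor C D) x i"
    using C.phi_minus_eps[OF x(2)] D.phi_minus_eps[OF x(3)]
    unfolding x(1) phi_tensor[OF x(2,3)] eps_tensor[OF x(2,3)] wt_tensor by linarith
qed

sublocale T: colour_crystal A i "tensor C D" "set_Cons B S"
  by (rule colour_crystal_tensor)

lemma tensor_fibres_subset: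
  assumes "b \<in> B"
  shows "(\<Union>t\<in>{0..phi C i b}. tensor_fibre D S (the (fiter C i t b)) (w t)) \<subseteq> set_Cons B S"
proof
  fix x assume "x \<in> (\<Union>t\<in>{0..phi C i b}. tensor_fibre D S (the (fiter C i t b)) (w t))"
  then obtain t p where t: "t \<le> phi C i b" and "p \<in> S" "x = the (fiter C i t b) # p"
    by (auto simp: tensor_fibre_def)
  moreover obtain y where "fiter C i t b = Some y" "y \<in> B"
    using C.fiter_SomeE[OF assms t] .
  ultimately show "x \<in> set_Cons B S"
    by (simp add: set_Cons_def)
qed

lemma fiter_tensor_fibre:
  assumes Aii: "A i i = 2" and b: "b \<in> B" and N: "int N = w i + int (phi C i b)"
    and t: "t \<le> phi C i b" and p: "p \<in> S" "wt D p = (\<lambda>k. w k + int t * A k i)"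
  obtains t' p' where "t' \<le> phi C i b" "p' \<in> S" "wt D p' = (\<lambda>k. w k + (int t' - int N) * A k i)"
    and "fiter (tensor C D) i N (the (fiter C i t b) # p) = Some (the (fiter C i t' b) # p')"
proof -
  obtain y where y: "fiter C i t b = Some y" "y \<in> B"
    using C.fiter_SomeE[OF b t] .
  have phi_y: "phi C i y = phi C i b - t"
    using C.fiter_SomeD[OF b y(1)] by simp
  define d where "d = phi C i y - eps D i p"
  have "int (phi D i p) - int (eps D i p) = w i + 2 * int t"
    using D.phi_minus_eps[OF p(1)] p(2) Aii by simp
  then have "N - d \<le> phi D i p"
    using N t phi_y unfolding d_def by linarith
  then obtain p' where p': "fiter D i (N - d) p = Some p'" "p' \<in> S"
    using D.fiter_SomeE[OF p(1)] by blast
  have "min N d \<le> phi C i y"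
    unfolding d_def by simp
  then obtain y' where y': "fiter C i (min N d) y = Some y'"
    using C.fiter_SomeE[OF y(2)] by blast
  have fiter_b: "fiter C i (min N d + t) b = Some y'"
    using y(1) y' by (simp add: fiter_piter piter_add)
  then have "min N d + t \<le> phi C i b"
    using C.fiter_dom[OF b] by blast
  moreover have "wt D p' = (\<lambda>k. w k + (int (min N d + t) - int N) * A k i)"
  proof -
    have shift: "int (min N d + t) - int N = int t - int (N - d)"
      by simp
    show ?thesis
      unfolding shift using D.fiter_SomeD[OF p(1) p'(1)] p(2) by (simp add: algebra_simps)
  qed
  moreover have "fiter (tensor C D) i N (the (fiter C i t b) # p) = Some (the (fiter C i (min N d + t) b) # p')"
    using y y' p' fiter_b by (simp add: fiter_tensor[OF y(2) p(1)] d_def)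
  ultimately show ?thesis
    using that p'(2) by blast
qed

lemma eiter_tensor_fibre:
  assumes Aii: "A i i = 2" and b: "b \<in> B" and N: "int N = w i + int (phi C i b)"
    and t: "t \<le> phi C i b" and p: "p \<in> S" "wt D p = (\<lambda>k. w k + (int t - int N) * A k i)"
  obtains t' p' where "t' \<le> phi C i b" "p' \<in> S" "wt D p' = (\<lambda>k. w k + int t' * A k i)"
    and "eiter (tensor C D) i N (the (fiter C i t b) # p) = Some (the (fiter C i t' b) # p')"
proof -
  obtain y where y: "fiter C i t b = Some y" "y \<in> B"
    using C.fiter_SomeE[OF b t] .
  have phi_y: "phi C i y = phi C i b - t"
    using C.fiter_SomeD[OF b y(1)] by simp
  define d where "d = eps D i p - phi C i y"
  have "int (phi D i p) - int (eps D i p) = w i + 2 * int t - 2 * int N"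
    using D.phi_minus_eps[OF p(1)] p(2) Aii by simp
  then have a_le: "N - d \<le> t"
    using N t phi_y unfolding d_def by linarith
  have "min N d \<le> eps D i p"
    unfolding d_def by simp
  then obtain p' where p': "eiter D i (min N d) p = Some p'" "p' \<in> S"
    using D.eiter_SomeE[OF p(1)] by blast
  have "t - (N - d) \<le> phi C i b"
    using t by simp
  then obtain x where x: "fiter C i (t - (N - d)) b = Some x" "x \<in> B"
    using C.fiter_SomeE[OF b] by blast
  have "fiter C i (N - d) x = Some y"
    using piter_add[of "ff C i" "N - d" "t - (N - d)" b] x(1) y(1) a_le by (simp add: fiter_piter)
  then have "eiter C i (N - d) y = Some x"
    using C.fiter_inverse[OF x(2)] by blast
  then have "eiter (tensor C D) i N (the (fiter C i t b) # p) = Some (the (fiter C i (t - (N - d)) b) # p')"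
    using y x p' by (simp add: eiter_tensor[OF y(2) p(1)] d_def)
  moreover have "wt D p' = (\<lambda>k. w k + int (t - (N - d)) * A k i)"
  proof -
    have shift: "int (t - (N - d)) = int t - int N + int (min N d)"
      using a_le by simp
    show ?thesis
      unfolding shift using D.eiter_wt[OF p(1) p'(1)] p(2) by (simp add: algebra_simps)
  qed
  ultimately show ?thesis
    using that \<open>t - (N - d) \<le> phi C i b\<close> p'(2) by blast
qed

lemma fiter_tensor_bij:
  assumes Aii: "A i i = 2" and b: "b \<in> B" and N: "int N = w i + int (phi C i b)"
  defines "X \<equiv> \<Union>t\<in>{0..phi C i b}. tensor_fibre D S (the (fiter C i t b)) (\<lambda>k. w k + int t * A k i)"
    and "Y \<equiv> \<Union>t\<in>{0..phi C i b}. tensor_fibre D S (the (fiter C i t b)) (\<lambda>k. w k + (int t - int N) * A k i)"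
  shows "(\<forall>x\<in>X. fiter (tensor C D) i N x \<noteq> None) \<and> bij_betw (\<lambda>x. the (fiter (tensor C D) i N x)) X Y"
proof (rule bij_betw_partial_inverse[where G = "eiter (tensor C D) i N"])
  show "\<exists>z\<in>Y. fiter (tensor C D) i N x = Some z \<and> eiter (tensor C D) i N z = Some x"
    if "x \<in> X" for x
  proof -
    obtain t p where t: "t \<le> phi C i b" and p: "p \<in> S" "wt D p = (\<lambda>k. w k + int t * A k i)"
      and x: "x = the (fiter C i t b) # p"
      using \<open>x \<in> X\<close> by (auto simp: X_def tensor_fibre_def)
    obtain t' p' where "t' \<le> phi C i b" "p' \<in> S" "wt D p' = (\<lambda>k. w k + (int t' - int N) * A k i)"
      and "fiter (tensor C D) i N x = Some (the (fiter C i t' b) # p')"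
      unfolding x by (rule fiter_tensor_fibre[OF Aii b N t p])
    moreover have "x \<in> set_Cons B S"
      using \<open>x \<in> X\<close> unfolding X_def by (rule subsetD[OF tensor_fibres_subset[OF b]])
    ultimately show ?thesis
      using T.fiter_inverse by (auto simp: Y_def tensor_fibre_def)
  qed
next
  show "\<exists>x\<in>X. eiter (tensor C D) i N z = Some x \<and> fiter (tensor C D) i N x = Some z"
    if "z \<in> Y" for z
  proof -
    obtain t p where t: "t \<le> phi C i b" and p: "p \<in> S" "wt D p = (\<lambda>k. w k + (int t - int N) * A k i)"
      and z: "z = the (fiter C i t b) # p"
      using \<open>z \<in> Y\<close> by (auto simp: Y_def tensor_fibre_def)
    obtain t' p' where "t' \<le> phi C i b" "p' \<in> S" "wt D p' = (\<lambda>k. w k + int t' * A k i)"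
      and "eiter (tensor C D) i N z = Some (the (fiter C i t' b) # p')"
      unfolding z by (rule eiter_tensor_fibre[OF Aii b N t p])
    moreover have "z \<in> set_Cons B S"
      using \<open>z \<in> Y\<close> unfolding Y_def by (rule subsetD[OF tensor_fibres_subset[OF b]])
    ultimately show ?thesis
      using T.eiter_inverse by (auto simp: X_def tensor_fibre_def)
  qed
qed

end

lemma in_listset_replicate: "xs \<in> listset (replicate j B) \<longleftrightarrow> length xs = j \<and> set xs \<subseteq> B"
  by (induction j arbitrary: xs) (auto simp: set_Cons_def length_Suc_conv)

lemma single_eq_tensor_unit_crys:
  assumes "colour_crystal A i C B" "x \<in> set_Cons B {[]}"
  shows "ff (single C) i x = ff (tensor C unit_crys) i x"
    and "ee (single C) i x = ee (tensor C unit_crys) i x"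
    and "wt (single C) x = wt (tensor C unit_crys) x"
proof -
  obtain y where x: "x = [y]" "y \<in> B"
    using assms(2) by auto
  then show "ff (single C) i x = ff (tensor C unit_crys) i x"
    using colour_crystal.phi_eq_0_iff[OF assms(1)]
    by (cases "phi C i y") (simp_all add: single_def tensor_def)
  show "ee (single C) i x = ee (tensor C unit_crys) i x" "wt (single C) x = wt (tensor C unit_crys) x"
    using x by (simp_all add: single_def tensor_def)
qed

lemma colour_crystal_tpow:
  assumes C: "colour_crystal A i C B"
  shows "colour_crystal A i (tpow C j) (listset (replicate (Suc j) B))"
proof (induction j)
  case 0
  interpret colour_crystal_pair A i C B unit_crys "{[]}"
    using C colour_crystal_unit_crys by (rule colour_crystal_pair.intro)
  show ?case
    using colour_crystal_cong[OF colour_crystal_tensor] single_eq_tensor_unit_crys[OF C] by simp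
next
  case (Suc j)
  interpret colour_crystal_pair A i C B "tpow C j" "listset (replicate (Suc j) B)"
    using C Suc.IH by (rule colour_crystal_pair.intro)
  show ?case
    using colour_crystal_tensor by simp
qed

lemma wt_tpow: "xs \<in> listset (replicate (Suc j) B) \<Longrightarrow> wt (tpow C j) xs = (\<lambda>k. \<Sum>x\<leftarrow>xs. wt C x k)"
proof (induction j arbitrary: xs)
  case 0
  then show ?case by (auto simp: single_def)
next
  case (Suc j)
  then obtain y ys where "xs = y # ys" "ys \<in> listset (replicate (Suc j) B)"
    unfolding replicate_Suc[of "Suc j"] listset.simps set_Cons_def by blast
  with Suc.IH show ?case
    by (simp add: tensor_def)
qed

lemma tpow_as_tensor:
  assumes C: "colour_crystal A i C B"
  obtains D where "colour_crystal A i D (listset (replicate j B))"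
    and "\<And>xs. xs \<in> listset (replicate j B) \<Longrightarrow> wt D xs = (\<lambda>k. \<Sum>x\<leftarrow>xs. wt C x k)"
    and "\<And>x k. x \<in> set_Cons B (listset (replicate j B)) \<Longrightarrow>
      fiter (tpow C j) i k x = fiter (tensor C D) i k x"
proof (cases j)
  case 0
  interpret colour_crystal_pair A i C B unit_crys "{[]}"
    using C colour_crystal_unit_crys by (rule colour_crystal_pair.intro)
  have "fiter (single C) i k x = fiter (tensor C unit_crys) i k x" if "x \<in> set_Cons B {[]}" for x k
    using T.fiter_cong[OF single_eq_tensor_unit_crys(1)[OF C] that] .
  with 0 colour_crystal_unit_crys show ?thesis
    by (intro that[of unit_crys]) auto
next
  case (Suc j')
  with colour_crystal_tpow[OF C] wt_tpow show ?thesis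
    by (intro that[of "tpow C j'"]) auto
qed

lemma fiter_tpow_bij:
  fixes j :: nat
  assumes C: "colour_crystal A i C B" and Aii: "A i i = 2" and b: "b \<in> B"
    and N: "int N = w i + int (phi C i b)"
    and source: "\<And>t. cl (mu t) = (\<lambda>k. w k + int t * A k i)"
    and target: "\<And>t. cl (nu t) = (\<lambda>k. w k + (int t - int N) * A k i)"
  defines "X \<equiv> \<Union>t\<in>{0..phi C i b}. Pj B C j (the (fiter C i t b)) (mu t)"
    and "Y \<equiv> \<Union>t\<in>{0..phi C i b}. Pj B C j (the (fiter C i t b)) (nu t)"
  shows "(\<forall>x\<in>X. fiter (tpow C j) i N x \<noteq> None) \<and> bij_betw (\<lambda>x. the (fiter (tpow C j) i N x)) X Y"
proof -
  obtain D where D: "colour_crystal A i D (listset (replicate j B))"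
    and wt_D: "\<And>xs. xs \<in> listset (replicate j B) \<Longrightarrow> wt D xs = (\<lambda>k. \<Sum>x\<leftarrow>xs. wt C x k)"
    and tpow_eq: "\<And>x k. x \<in> set_Cons B (listset (replicate j B)) \<Longrightarrow>
      fiter (tpow C j) i k x = fiter (tensor C D) i k x"
    using tpow_as_tensor[OF C] by blast
  interpret colour_crystal_pair A i C B D "listset (replicate j B)"
    using C D by (rule colour_crystal_pair.intro)
  have Pj_eq: "Pj B C j y nu = tensor_fibre D (listset (replicate j B)) y (cl nu)" for y nu
    using wt_D by (auto simp: Pj_def tensor_fibre_def in_listset_replicate)
  have agree: "fiter (tpow C j) i N x = fiter (tensor C D) i N x" if "x \<in> X" for x
    using tpow_eq subsetD[OF tensor_fibres_subset[OF b] that[unfolded X_def Pj_eq]] .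
  have "(\<forall>x\<in>X. fiter (tensor C D) i N x \<noteq> None)
      \<and> bij_betw (\<lambda>x. the (fiter (tensor C D) i N x)) X Y"
    using fiter_tensor_bij[where w = w and N = N, OF Aii b N] unfolding X_def Y_def Pj_eq source target .
  moreover have "bij_betw (\<lambda>x. the (fiter (tpow C j) i N x)) X Y
      \<longleftrightarrow> bij_betw (\<lambda>x. the (fiter (tensor C D) i N x)) X Y"
    by (rule bij_betw_cong) (simp only: agree)
  ultimately show ?thesis
    using agree by simp
qed

lemma cl_add_alpha: "cl (wadd mu (wscale c (alpha A i0 i))) = (\<lambda>k. cl mu k + c * A k i)"
  by (simp add: cl_def wadd_def wscale_def alpha_def)

lemma cl_rrefl_add_alpha:
  "A i i = 2 \<Longrightarrow>
    cl (rrefl A i0 i (wadd mu (wscale c (alpha A i0 i)))) = (\<lambda>k. cl mu k - (pairing i mu + c) * A k i)"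
  by (simp add: cl_def rrefl_def wadd_def wscale_def alpha_def pairing_def algebra_simps)

theorem mainTheorem4:
  fixes A :: "'i::finite \<Rightarrow> 'i \<Rightarrow> int" and i0 :: 'i
    and B :: "'b set" and C :: "('i, 'b) crys"
    and b :: 'b and i :: 'i and j :: nat and mu :: "'i wP" and m :: nat and n :: int
  assumes "affine_gcm A"
    and "is_crystal A B C"
    and "b \<in> B"
    and "m = phi C i b"
    and "n = pairing i mu + int m"
    and "n \<ge> 0"
  shows "(\<forall>x \<in> (\<Union>t\<in>{0..m}. Pj B C j (the (fiter C i t b))
                    (wadd mu (wscale (int t) (alpha A i0 i)))).
            fiter (tpow C j) i (nat n) x \<noteq> None)
    \<and> bij_betw (\<lambda>x. the (fiter (tpow C j) i (nat n) x))
        (\<Union>t\<in>{0..m}. Pj B C j (the (fiter C i t b)) (wadd mu (wscale (int t) (alpha A i0 i))))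
        (\<Union>t\<in>{0..m}. Pj B C j (the (fiter C i t b))
                    (rrefl A i0 i (wadd mu (wscale (int m - int t) (alpha A i0 i)))))"
proof -
  have Aii: "A i i = 2"
    using assms(1) by (simp add: affine_gcm_def gcm_def)
  have N: "int (nat n) = cl mu i + int (phi C i b)"
    using assms(4-6) by (simp add: cl_def pairing_def)
  have reflected: "cl (rrefl A i0 i (wadd mu (wscale (int m - int t) (alpha A i0 i))))
      = (\<lambda>k. cl mu k + (int t - int (nat n)) * A k i)" for t
    using assms(5,6) by (simp add: cl_rrefl_add_alpha[where A = A and i = i, OF Aii] algebra_simps)
  show ?thesis
    unfolding assms(4)
    by (rule fiter_tpow_bij[where mu = "\<lambda>t. wadd mu (wscale (int t) (alpha A i0 i))"
          and nu = "\<lambda>t. rrefl A i0 i (wadd mu (wscale (int (phi C i b) - int t) (alpha A i0 i)))",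
          OF colour_crystal_of_is_crystal[OF assms(2) Aii] Aii assms(3) N
          cl_add_alpha reflected[unfolded assms(4)]])
qed

end
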